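(* Let $X$ be a real Banach space with $\dim X\ge 2$. Then $S_P(X)<\tfrac12$ if and only if $X$ is uniformly non-square.
   Context: For a real Banach space $X$ with unit sphere $S_X$, the P-angle constant is $S_P(X)=\sup\left\{\frac{\|x+y\|^2+\|x-y\|^2-4}{2\|x+y\|\,\|x-y\|}: x,y\in S_X,\ x\neq \pm y\right\}$. $X$ is uniformly non-square if there exists $\delta\in(0,1)$ such that for all $x,y\in S_X$, either $\frac{\|x-y\|}{2}\le 1-\delta$ or $\frac{\|x+y\|}{2}\le 1-\delta$. *)

theory Defs
  imports "HOL-Analysis.Analysis"
begin

definition unit_sphere :: "'a::real_normed_vector set" where
  "unit_sphere = {x. norm x = 1}"

definition P_angle_const :: "'a::real_normed_vector itself \<Rightarrow> real" where
  "P_angle_const (_::'a itself) =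
     Sup {(norm (x + y)^2 + norm (x - y)^2 - 4) / (2 * norm (x + y) * norm (x - y)) | x y :: 'a.
            x \<in> unit_sphere \<and> y \<in> unit_sphere \<and> x \<noteq> y \<and> x \<noteq> - y}"

definition uniformly_non_square :: "'a::real_normed_vector itself \<Rightarrow> bool" where
  "uniformly_non_square (_::'a itself) \<longleftrightarrow>
     (\<exists>\<delta>::real. 0 < \<delta> \<and> \<delta> < 1 \<and>
        (\<forall>x y :: 'a. x \<in> unit_sphere \<longrightarrow> y \<in> unit_sphere \<longrightarrow>
           norm (x - y) / 2 \<le> 1 - \<delta> \<or> norm (x + y) / 2 \<le> 1 - \<delta>))"

text \<open>dim X \<ge> 2 (possibly infinite): there are two linearly independent vectors.\<close>
definition dim_ge_2 :: "'a::real_vector itself \<Rightarrow> bool" where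
  "dim_ge_2 (_::'a itself) \<longleftrightarrow> (\<exists>x y :: 'a. x \<noteq> y \<and> independent {x, y})"

end

theory Submission
  imports Defs
begin

text \<open>With \<open>a = \<parallel>x + y\<parallel>\<close> and \<open>b = \<parallel>x - y\<parallel>\<close> in \<open>(0, 2]\<close>, the P-angle quotient
  \<open>(a\<^sup>2 + b\<^sup>2 - 4) / (2 a b)\<close> is at most \<open>min a b / 4\<close>, and it is close to \<open>1/2\<close> as soon
  as both \<open>a\<close> and \<open>b\<close> are close to \<open>2\<close>. So the quotient approaches \<open>1/2\<close> exactly along
  pairs of unit vectors that almost span a square, and \<open>S\<^sub>P(X) < 1/2\<close> says precisely that such
  pairs are uniformly excluded. The dimension hypothesis only ensures that the supremum is
  taken over a nonempty set.\<close>

definition P_angle_ratio :: "'a::real_normed_vector \<Rightarrow> 'a \<Rightarrow> real" where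
  "P_angle_ratio x y =
     (norm (x + y)^2 + norm (x - y)^2 - 4) / (2 * norm (x + y) * norm (x - y))"

definition P_angle_values :: "'a::real_normed_vector itself \<Rightarrow> real set" where
  "P_angle_values (_::'a itself) =
     {P_angle_ratio x y | x y :: 'a.
        x \<in> unit_sphere \<and> y \<in> unit_sphere \<and> x \<noteq> y \<and> x \<noteq> - y}"

lemma P_angle_const_eq_Sup_values:
  "P_angle_const TYPE('a::real_normed_vector) = Sup (P_angle_values TYPE('a))"
  unfolding P_angle_const_def P_angle_values_def P_angle_ratio_def ..

lemma P_angle_ratio_in_values:
  fixes x y :: "'a::real_normed_vector"
  assumes "norm x = 1" "norm y = 1" "x \<noteq> y" "x \<noteq> - y"
  shows "P_angle_ratio x y \<in> P_angle_values TYPE('a)"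
  using assms unfolding P_angle_values_def unit_sphere_def by blast

lemma P_angle_valuesE:
  assumes "z \<in> P_angle_values TYPE('a)"
  obtains x y :: "'a::real_normed_vector" where "z = P_angle_ratio x y"
    "norm x = 1" "norm y = 1" "x \<noteq> y" "x \<noteq> - y"
  using assms unfolding P_angle_values_def unit_sphere_def by blast

lemma norm_add_le_2:
  fixes x y :: "'a::real_normed_vector"
  shows "norm x = 1 \<Longrightarrow> norm y = 1 \<Longrightarrow> norm (x + y) \<le> 2"
  using norm_triangle_ineq[of x y] by simp

lemma norm_diff_le_2:
  fixes x y :: "'a::real_normed_vector"
  shows "norm x = 1 \<Longrightarrow> norm y = 1 \<Longrightarrow> norm (x - y) \<le> 2"
  using norm_triangle_ineq4[of x y] by simp

lemma quotient_le_quarter: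
  fixes a b :: real
  assumes "0 < a" "0 < b" "a \<le> 2" "b \<le> 2"
  shows "(a^2 + b^2 - 4) / (2 * a * b) \<le> b / 4"
proof -
  have "b^2 \<le> 2^2" using assms by (intro power_mono) auto
  then have "(a - 2) * (2 * a + 4 - b^2) \<le> 0"
    using assms by (intro mult_nonpos_nonneg) auto
  then have "2 * (a^2 + b^2 - 4) \<le> a * b^2"
    by (simp add: algebra_simps power2_eq_square)
  then show ?thesis
    using assms by (simp add: divide_le_eq power2_eq_square algebra_simps)
qed

lemma quotient_ge_near_two:
  fixes a b d :: real
  assumes d: "0 < d" "d \<le> 1/8"
    and a: "2 - 2 * d < a" "a \<le> 2" and b: "2 - 2 * d < b" "b \<le> 2"
  shows "1/2 - 2 * d \<le> (a^2 + b^2 - 4) / (2 * a * b)"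
proof -
  have c: "0 < 2 - 2 * d" using d by simp
  have "(2 - 2 * d)^2 \<le> a^2" "(2 - 2 * d)^2 \<le> b^2"
    using a b c by (auto intro!: power_mono)
  moreover have "4 - 8 * d \<le> (2 - 2 * d)^2"
    by (simp add: power2_eq_square algebra_simps)
  ultimately have num: "4 - 16 * d \<le> a^2 + b^2 - 4" by linarith
  have "a * b \<le> 2 * 2" using a b c by (intro mult_mono) auto
  moreover have "0 < a * b" using a b c by simp
  moreover have "0 < a^2 + b^2 - 4" using num d by linarith
  ultimately have "(a^2 + b^2 - 4) / 8 \<le> (a^2 + b^2 - 4) / (2 * a * b)"
    by (intro divide_left_mono) auto
  moreover have "1/2 - 2 * d \<le> (a^2 + b^2 - 4) / 8" using num by simp
  ultimately show ?thesis by linarith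
qed

lemma P_angle_ratio_le_min_norm:
  fixes x y :: "'a::real_normed_vector"
  assumes "norm x = 1" "norm y = 1" "x \<noteq> y" "x \<noteq> - y"
  shows "P_angle_ratio x y \<le> min (norm (x + y)) (norm (x - y)) / 4"
proof -
  have a: "0 < norm (x + y)" "norm (x + y) \<le> 2"
    using assms norm_add_le_2 by (auto simp: add_eq_0_iff2)
  have b: "0 < norm (x - y)" "norm (x - y) \<le> 2"
    using assms norm_diff_le_2 by auto
  have "P_angle_ratio x y \<le> norm (x - y) / 4"
    unfolding P_angle_ratio_def using quotient_le_quarter[OF a(1) b(1) a(2) b(2)] .
  moreover have "P_angle_ratio x y \<le> norm (x + y) / 4"
    unfolding P_angle_ratio_def using quotient_le_quarter[OF b(1) a(1) b(2) a(2)]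
    by (simp add: add.commute mult.commute mult.left_commute)
  ultimately show ?thesis by simp
qed

lemma bdd_above_P_angle_values: "bdd_above (P_angle_values TYPE('a::real_normed_vector))"
proof (rule bdd_aboveI)
  fix z assume "z \<in> P_angle_values TYPE('a)"
  then obtain x y :: 'a where "z = P_angle_ratio x y"
    and xy: "norm x = 1" "norm y = 1" "x \<noteq> y" "x \<noteq> - y"
    by (rule P_angle_valuesE)
  with P_angle_ratio_le_min_norm[OF xy] norm_diff_le_2[OF xy(1,2)]
  show "z \<le> 1/2" by linarith
qed

lemma P_angle_ratio_ge_near_square:
  fixes x y :: "'a::real_normed_vector"
  assumes "norm x = 1" "norm y = 1" "0 < d" "d \<le> 1/8"
    and "2 - 2 * d < norm (x + y)" "2 - 2 * d < norm (x - y)"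
  shows "1/2 - 2 * d \<le> P_angle_ratio x y"
  unfolding P_angle_ratio_def
  using assms norm_add_le_2 norm_diff_le_2 by (intro quotient_ge_near_two) auto

lemma unit_vectors_not_parallel:
  fixes x y :: "'a::real_normed_vector"
  assumes "independent {x, y}" "x \<noteq> y"
  defines "u \<equiv> x /\<^sub>R norm x" and "v \<equiv> y /\<^sub>R norm y"
  shows "norm u = 1" "norm v = 1" "u \<noteq> v" "u \<noteq> - v"
proof -
  have x0: "x \<noteq> 0" and y0: "y \<noteq> 0" using assms(1) dependent_zero by auto
  then show "norm u = 1" "norm v = 1" unfolding u_def v_def by auto
  have x_notin: "x \<notin> span {y}"
    using assms(1,2) by (simp add: independent_insert)
  have x_eq: "x = norm x *\<^sub>R u" using x0 by (simp add: u_def)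
  show "u \<noteq> v"
  proof
    assume "u = v"
    with x_eq have "x = (norm x / norm y) *\<^sub>R y" by (simp add: v_def divide_inverse mult.commute)
    with x_notin show False by (metis span_base span_scale singletonI)
  qed
  show "u \<noteq> - v"
  proof
    assume "u = - v"
    with x_eq have "x = (- norm x / norm y) *\<^sub>R y" by (simp add: v_def divide_inverse mult.commute)
    with x_notin show False by (metis span_base span_scale singletonI)
  qed
qed

lemma P_angle_values_nonempty:
  assumes "dim_ge_2 TYPE('a::real_normed_vector)"
  shows "P_angle_values TYPE('a) \<noteq> {}"
proof -
  obtain x y :: 'a where "x \<noteq> y" "independent {x, y}"
    using assms unfolding dim_ge_2_def by blast
  then show ?thesis
    using P_angle_ratio_in_values[OF unit_vectors_not_parallel] by blast
qed

lemma uniformly_non_square_if_P_angle_const_less_half: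
  assumes "P_angle_const TYPE('a::real_normed_vector) < 1/2"
  shows "uniformly_non_square TYPE('a)"
proof -
  define s where "s = P_angle_const TYPE('a)"
  \<comment> \<open>small enough that \<open>1/2 - 2 d\<close> still exceeds \<open>s\<close>\<close>
  define d where "d = min (1/8) ((1/2 - s) / 4)"
  have d: "0 < d" "d \<le> 1/8" "d \<le> (1/2 - s) / 4"
    using assms unfolding s_def d_def by (auto simp: min_def)
  have "norm (x - y) / 2 \<le> 1 - d \<or> norm (x + y) / 2 \<le> 1 - d"
    if "norm x = 1" "norm y = 1" for x y :: 'a
  proof (rule ccontr)
    assume "\<not> ?thesis"
    then have near: "2 - 2 * d < norm (x + y)" "2 - 2 * d < norm (x - y)" by auto
    then have "x \<noteq> y" "x \<noteq> - y" using d by auto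
    with that have "P_angle_ratio x y \<le> s"
      unfolding s_def P_angle_const_eq_Sup_values
      by (intro cSup_upper bdd_above_P_angle_values P_angle_ratio_in_values)
    moreover have "1/2 - 2 * d \<le> P_angle_ratio x y"
      using P_angle_ratio_ge_near_square[OF that d(1,2) near] .
    ultimately show False using d assms unfolding s_def by (simp add: field_simps)
  qed
  with d show ?thesis
    unfolding uniformly_non_square_def unit_sphere_def by (intro exI[of _ d]) auto
qed

lemma P_angle_const_less_half_if_uniformly_non_square:
  assumes "dim_ge_2 TYPE('a::real_normed_vector)" "uniformly_non_square TYPE('a)"
  shows "P_angle_const TYPE('a) < 1/2"
proof -
  obtain d :: real where d: "0 < d" and square_free:
    "\<And>x y :: 'a. norm x = 1 \<Longrightarrow> norm y = 1 \<Longrightarrow>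
       norm (x - y) / 2 \<le> 1 - d \<or> norm (x + y) / 2 \<le> 1 - d"
    using assms(2) unfolding uniformly_non_square_def unit_sphere_def by blast
  have "Sup (P_angle_values TYPE('a)) \<le> (1 - d) / 2"
  proof (rule cSup_least[OF P_angle_values_nonempty[OF assms(1)]])
    fix z assume "z \<in> P_angle_values TYPE('a)"
    then obtain x y :: 'a where "z = P_angle_ratio x y"
      and xy: "norm x = 1" "norm y = 1" "x \<noteq> y" "x \<noteq> - y"
      by (rule P_angle_valuesE)
    moreover have "min (norm (x + y)) (norm (x - y)) / 4 \<le> (1 - d) / 2"
      using square_free[OF xy(1,2)] by auto
    ultimately show "z \<le> (1 - d) / 2"
      using P_angle_ratio_le_min_norm[OF xy] by linarith
  qed
  with d show ?thesis by (simp add: P_angle_const_eq_Sup_values)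
qed

theorem theorem5p1:
  assumes "dim_ge_2 TYPE('a::banach)"
  shows "P_angle_const TYPE('a) < 1/2 \<longleftrightarrow> uniformly_non_square TYPE('a)"
  using uniformly_non_square_if_P_angle_const_less_half
    P_angle_const_less_half_if_uniformly_non_square[OF assms]
  by blast

end
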